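(* Let $\ell(t)=\log(1+\exp(-t))$. Let $q$ be a distribution over prompts $\mathbf{x}$ and let $p_{\mathrm{data}}(\cdot\mid\mathbf{x})$ and $p_{\boldsymbol{\theta}_t}(\cdot\mid\mathbf{x})$ be positive conditional distributions over responses. Define the joint densities $p_{+}(\mathbf{y},\mathbf{y}',\mathbf{x})=q(\mathbf{x})\,p_{\mathrm{data}}(\mathbf{y}\mid\mathbf{x})\,p_{\boldsymbol{\theta}_t}(\mathbf{y}'\mid\mathbf{x})$ and $p_{-}(\mathbf{y},\mathbf{y}',\mathbf{x})=q(\mathbf{x})\,p_{\boldsymbol{\theta}_t}(\mathbf{y}\mid\mathbf{x})\,p_{\mathrm{data}}(\mathbf{y}'\mid\mathbf{x})$. Then for every function $f(\mathbf{x},\mathbf{y})$, $$\mathbb{E}_{\mathbf{x}\sim q(\cdot),\,\mathbf{y}\sim p_{\mathrm{data}}(\cdot\mid\mathbf{x}),\,\mathbf{y}'\sim p_{\boldsymbol{\theta}_t}(\cdot\mid\mathbf{x})}\big[\ell\big(f(\mathbf{x},\mathbf{y})-f(\mathbf{x},\mathbf{y}')\big)\big]\ \ge\ \log 2-\mathrm{JSD}(p_{+}\|p_{-}),$$ where $\mathrm{JSD}(p\|q)=\tfrac12\mathrm{KL}\big(p\,\|\,\tfrac{p+q}{2}\big)+\tfrac12\mathrm{KL}\big(q\,\|\,\tfrac{p+q}{2}\big)$ is the Jensen–Shannon divergence. Moreover, the value $\log 2-\mathrm{JSD}(p_{+}\|p_{-})$ is attained by $f^{*}$ if and only if $$f^{*}(\mathbf{x},\mathbf{y})=Z(\mathbf{x})+\log\Big(\frac{p_{\mathrm{data}}(\mathbf{y}\mid\mathbf{x})}{p_{\boldsymbol{\theta}_t}(\mathbf{y}\mid\mathbf{x})}\Big)$$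 for some function $Z(\mathbf{x})$ (possibly depending on $\mathbf{x}$).
   Context: $\mathrm{KL}(\cdot\|\cdot)$ denotes the Kullback–Leibler divergence. *)

theory Defs
  imports "HOL-Probability.Probability"
begin

definition logistic_loss :: "real \<Rightarrow> real" where
  "logistic_loss t = ln (1 + exp (- t))"

definition KL_pmf :: "'a pmf \<Rightarrow> 'a pmf \<Rightarrow> real" where
  "KL_pmf P R = measure_pmf.expectation P (\<lambda>z. ln (pmf P z / pmf R z))"

definition mix_pmf :: "'a pmf \<Rightarrow> 'a pmf \<Rightarrow> 'a pmf" where
  "mix_pmf P Q = bind_pmf (bernoulli_pmf (1/2)) (\<lambda>b. if b then P else Q)"

definition JSD :: "'a pmf \<Rightarrow> 'a pmf \<Rightarrow> real" where
  "JSD P Q = KL_pmf P (mix_pmf P Q) / 2 + KL_pmf Q (mix_pmf P Q) / 2"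

definition p_plus :: "'x pmf \<Rightarrow> ('x \<Rightarrow> 'y pmf) \<Rightarrow> ('x \<Rightarrow> 'y pmf) \<Rightarrow> ('y \<times> 'y \<times> 'x) pmf" where
  "p_plus q pd pt = bind_pmf q (\<lambda>x. bind_pmf (pd x) (\<lambda>y. map_pmf (\<lambda>y'. (y, y', x)) (pt x)))"

definition p_minus :: "'x pmf \<Rightarrow> ('x \<Rightarrow> 'y pmf) \<Rightarrow> ('x \<Rightarrow> 'y pmf) \<Rightarrow> ('y \<times> 'y \<times> 'x) pmf" where
  "p_minus q pd pt = bind_pmf q (\<lambda>x. bind_pmf (pt x) (\<lambda>y. map_pmf (\<lambda>y'. (y, y', x)) (pd x)))"

definition spin_loss :: "'x pmf \<Rightarrow> ('x \<Rightarrow> 'y pmf) \<Rightarrow> ('x \<Rightarrow> 'y pmf) \<Rightarrow> ('x \<Rightarrow> 'y \<Rightarrow> real) \<Rightarrow> ennreal" where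
  "spin_loss q pd pt f =
     (\<integral>\<^sup>+ x. \<integral>\<^sup>+ y. \<integral>\<^sup>+ y'. ennreal (logistic_loss (f x y - f x y')) \<partial>measure_pmf (pt x) \<partial>measure_pmf (pd x) \<partial>measure_pmf q)"

end

(*
  Swapping the two responses maps p_plus to p_minus and negates the margin
  g (y, y', x) = f x y - f x y', so twice the loss equals
  \<Sum>z. P z * l (g z) + Q z * l (- g z), where P = p_plus, Q = p_minus and l = logistic_loss.
  Since l t = - ln (sigmoid t) and l (- t) = - ln (1 - sigmoid t), each summand is a
  two-point cross entropy; by Gibbs' inequality it is at least the entropy term
  - (a ln (a / (a + b)) + b ln (b / (a + b))) at (a, b) = (P z, Q z), with equality
  iff sigmoid (g z) = a / (a + b), i.e. g z = ln (a / b).  Summed over z, these entropy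
  terms give 2 (ln 2 - JSD P Q).  Finally P / Q at (y, y', x) is r x y / r x y' with
  r = p_data / p_theta, so equality everywhere says that f x - ln (r x) is constant in y.
*)

theory Submission
  imports Defs
begin

section \<open>Logistic loss and the two-point Gibbs inequality\<close>

definition sigmoid :: "real \<Rightarrow> real" where
  "sigmoid t = 1 / (1 + exp (- t))"

lemma one_plus_exp_pos: "0 < 1 + exp (t :: real)"
  by (simp add: add_pos_pos)

lemma sigmoid_pos: "0 < sigmoid t"
  by (simp add: sigmoid_def one_plus_exp_pos)

lemma sigmoid_less_1: "sigmoid t < 1"
  using one_plus_exp_pos[of "- t"] by (simp add: sigmoid_def)

lemma one_minus_sigmoid: "1 - sigmoid t = sigmoid (- t)"
  using one_plus_exp_pos[of t] one_plus_exp_pos[of "- t"]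
  by (simp add: sigmoid_def exp_minus field_simps)

lemma logistic_loss_eq_minus_ln_sigmoid: "logistic_loss t = - ln (sigmoid t)"
  by (simp add: logistic_loss_def sigmoid_def ln_div one_plus_exp_pos)

lemma sigmoid_eq_iff:
  assumes "0 < a" "0 < b"
  shows "sigmoid t = a / (a + b) \<longleftrightarrow> t = ln (a / b)"
proof -
  have "sigmoid t = a / (a + b) \<longleftrightarrow> exp (- t) = b / a"
    using assms one_plus_exp_pos[of "- t"] by (auto simp: sigmoid_def field_simps)
  also have "\<dots> \<longleftrightarrow> - t = ln (b / a)"
    using assms by (metis divide_pos_pos exp_ln ln_exp)
  also have "\<dots> \<longleftrightarrow> t = ln (a / b)"
    using assms by (auto simp: ln_div)
  finally show ?thesis .
qed

lemma ln_less_minus_one: "0 < (x::real) \<Longrightarrow> x \<noteq> 1 \<Longrightarrow> ln x < x - 1"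
  using ln_diff_less[of x 1] by simp

lemma two_point_gibbs_strict:
  fixes a b s :: real
  assumes a: "0 < a" and b: "0 < b" and s: "0 < s" "s < 1" and ne: "s \<noteq> a / (a + b)"
  shows "a * ln s + b * ln (1 - s) < a * ln (a / (a + b)) + b * ln (b / (a + b))"
proof -
  define u where "u = s / (a / (a + b))"
  define v where "v = (1 - s) / (b / (a + b))"
  have ab: "0 < a + b"
    using a b by simp
  have u: "0 < u" "u \<noteq> 1" and v: "0 < v"
    using a b ab s ne by (simp_all add: u_def v_def) (simp add: field_simps)
  have "a * ln u < a * (u - 1)"
    using a ln_less_minus_one[OF u] by simp
  moreover have "b * ln v \<le> b * (v - 1)"
    using b ln_le_minus_one[OF v] by simp
  moreover have "a * (u - 1) + b * (v - 1) = 0"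
    using a b by (simp add: u_def v_def field_simps)
  moreover have "ln u = ln s - ln (a / (a + b))" "ln v = ln (1 - s) - ln (b / (a + b))"
    unfolding u_def v_def using a b s by (simp_all only: ln_div) auto
  ultimately show ?thesis by (simp add: algebra_simps)
qed

lemma ln_div_add_nonpos:
  fixes a b :: real
  assumes "0 \<le> a" "0 \<le> b"
  shows "ln (a / (a + b)) \<le> 0"
  using assms by (cases "a = 0") auto  \<comment> \<open>the case a = 0 holds because ln 0 = 0\<close>

definition entropy2 :: "real \<Rightarrow> real \<Rightarrow> real" where
  "entropy2 a b = - (a * ln (a / (a + b)) + b * ln (b / (a + b)))"

lemma entropy2_nonneg:
  assumes "0 \<le> a" "0 \<le> b"
  shows "0 \<le> entropy2 a b"
proof -
  have "a * ln (a / (a + b)) \<le> 0" "b * ln (b / (a + b)) \<le> 0"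
    using ln_div_add_nonpos[of a b] ln_div_add_nonpos[of b a] assms
    by (simp_all add: mult_nonneg_nonpos add.commute)
  then show ?thesis
    by (simp add: entropy2_def)
qed

lemma logistic_loss_nonneg: "0 \<le> logistic_loss t"
  by (simp add: logistic_loss_def add_pos_pos)

lemma logistic_pair_loss_sigmoid:
  "a * logistic_loss t + b * logistic_loss (- t) = - (a * ln (sigmoid t) + b * ln (1 - sigmoid t))"
  by (simp add: logistic_loss_eq_minus_ln_sigmoid one_minus_sigmoid)

lemma logistic_pair_loss_at_ln_ratio:
  assumes "0 < a" "0 < b"
  shows "a * logistic_loss (ln (a / b)) + b * logistic_loss (- ln (a / b)) = entropy2 a b"
proof -
  have "1 - a / (a + b) = b / (a + b)"
    using assms by (simp add: field_simps)
  moreover have "sigmoid (ln (a / b)) = a / (a + b)"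
    using sigmoid_eq_iff[OF assms] by simp
  ultimately show ?thesis
    by (simp add: logistic_pair_loss_sigmoid entropy2_def)
qed

lemma entropy2_less_logistic_pair_loss:
  assumes "0 < a" "0 < b" "t \<noteq> ln (a / b)"
  shows "entropy2 a b < a * logistic_loss t + b * logistic_loss (- t)"
proof -
  have "sigmoid t \<noteq> a / (a + b)"
    using sigmoid_eq_iff[OF assms(1,2)] assms(3) by simp
  from two_point_gibbs_strict[OF assms(1,2) sigmoid_pos sigmoid_less_1 this]
  show ?thesis
    by (simp add: logistic_pair_loss_sigmoid entropy2_def)
qed

lemma entropy2_le_logistic_pair_loss:
  assumes "0 \<le> a" "0 \<le> b"
  shows "entropy2 a b \<le> a * logistic_loss t + b * logistic_loss (- t)"
proof (cases "a = 0 \<or> b = 0")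
  case True
  then have "entropy2 a b = 0"
    by (auto simp: entropy2_def)
  then show ?thesis
    using assms by (simp add: logistic_loss_nonneg)
next
  case False
  with assms have "0 < a" "0 < b" by auto
  then show ?thesis
    using entropy2_less_logistic_pair_loss logistic_pair_loss_at_ln_ratio
    by (cases "t = ln (a / b)") (auto intro: less_imp_le)
qed

lemma logistic_pair_loss_eq_entropy2_iff:
  assumes "0 < a" "0 < b"
  shows "a * logistic_loss t + b * logistic_loss (- t) = entropy2 a b \<longleftrightarrow> t = ln (a / b)"
  using entropy2_less_logistic_pair_loss[OF assms] logistic_pair_loss_at_ln_ratio[OF assms]
  by force

section \<open>Jensen--Shannon divergence as a sum of entropy terms\<close>

lemma minus_mult_ln_div_add_le:
  fixes a b :: real
  assumes "0 \<le> a" "0 \<le> b"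
  shows "- (a * ln (a / (a + b))) \<le> b"
proof (cases "a = 0")
  case False
  with assms have a: "0 < a" by simp
  have "- ln (a / (a + b)) = ln ((a + b) / a)"
    using a assms by (simp add: ln_div)
  also have "\<dots> \<le> (a + b) / a - 1"
    using a assms by (intro ln_le_minus_one) simp
  finally show ?thesis
    using a by (simp add: field_simps)
qed (use assms in simp)

lemma pmf_mix_pmf: "pmf (mix_pmf P Q) z = (pmf P z + pmf Q z) / 2"
  unfolding mix_pmf_def by (simp add: pmf_bind)

lemma mix_pmf_commute: "mix_pmf Q P = mix_pmf P Q"
  by (rule pmf_eqI) (simp add: pmf_mix_pmf add.commute)

lemma integrable_ln_pmf_div_sum:
  "integrable (measure_pmf P) (\<lambda>z. - ln (pmf P z / (pmf P z + pmf Q z)))"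
proof (rule integrableI_nonneg)
  have "(\<integral>\<^sup>+z. - ln (pmf P z / (pmf P z + pmf Q z)) \<partial>P)
      = (\<integral>\<^sup>+z. - (pmf P z * ln (pmf P z / (pmf P z + pmf Q z))) \<partial>count_space UNIV)"
    unfolding nn_integral_measure_pmf
    by (intro nn_integral_cong) (simp add: ennreal_mult'[symmetric])
  also have "\<dots> \<le> (\<integral>\<^sup>+z. pmf Q z \<partial>count_space UNIV)"
    by (intro nn_integral_mono) (simp add: minus_mult_ln_div_add_le)
  also have "\<dots> = 1"
    by (simp add: nn_integral_pmf)
  finally show "(\<integral>\<^sup>+z. - ln (pmf P z / (pmf P z + pmf Q z)) \<partial>P) < \<infinity>"
    by (simp add: le_less_trans)
qed (simp_all add: ln_div_add_nonpos)

lemma ln2_minus_KL_mix_pmf: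
  "ln 2 - KL_pmf P (mix_pmf P Q) = (\<integral>z. - ln (pmf P z / (pmf P z + pmf Q z)) \<partial>P)"
proof -
  have "AE z in P. ln (pmf P z / pmf (mix_pmf P Q) z) = ln 2 - - ln (pmf P z / (pmf P z + pmf Q z))"
  proof (rule AE_pmfI)
    fix z assume "z \<in> set_pmf P"
    define r where "r = pmf P z / (pmf P z + pmf Q z)"
    have "0 < pmf P z"
      using \<open>z \<in> set_pmf P\<close> by (rule pmf_positive)
    then have "r \<noteq> 0"
      unfolding r_def using add_pos_nonneg[of "pmf P z" "pmf Q z"] by simp
    moreover have "pmf P z / pmf (mix_pmf P Q) z = 2 * r"
      by (simp add: r_def pmf_mix_pmf)
    ultimately have "ln (pmf P z / pmf (mix_pmf P Q) z) = ln 2 - - ln r"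
      by (simp add: ln_mult)
    then show "ln (pmf P z / pmf (mix_pmf P Q) z) = ln 2 - - ln (pmf P z / (pmf P z + pmf Q z))"
      unfolding r_def .
  qed
  then have "KL_pmf P (mix_pmf P Q) = (\<integral>z. ln 2 - - ln (pmf P z / (pmf P z + pmf Q z)) \<partial>P)"
    unfolding KL_pmf_def by (intro integral_cong_AE) simp_all
  also have "\<dots> = ln 2 - (\<integral>z. - ln (pmf P z / (pmf P z + pmf Q z)) \<partial>P)"
    using integrable_ln_pmf_div_sum by (subst Bochner_Integration.integral_diff) auto
  finally show ?thesis by simp
qed

lemma KL_mix_pmf_le_ln2: "KL_pmf P (mix_pmf P Q) \<le> ln 2"
proof -
  have "0 \<le> (\<integral>z. - ln (pmf P z / (pmf P z + pmf Q z)) \<partial>P)"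
    by (rule Bochner_Integration.integral_nonneg) (simp add: ln_div_add_nonpos)
  then show ?thesis
    using ln2_minus_KL_mix_pmf[of P Q] by linarith
qed

lemma ennreal_ln2_minus_KL_mix_pmf:
  "ennreal (ln 2 - KL_pmf P (mix_pmf P Q))
     = (\<integral>\<^sup>+z. - (pmf P z * ln (pmf P z / (pmf P z + pmf Q z))) \<partial>count_space UNIV)"
proof -
  have "ennreal (ln 2 - KL_pmf P (mix_pmf P Q)) = (\<integral>\<^sup>+z. - ln (pmf P z / (pmf P z + pmf Q z)) \<partial>P)"
    unfolding ln2_minus_KL_mix_pmf
    by (rule nn_integral_eq_integral[symmetric, OF integrable_ln_pmf_div_sum]) (simp add: ln_div_add_nonpos)
  also have "\<dots> = (\<integral>\<^sup>+z. - (pmf P z * ln (pmf P z / (pmf P z + pmf Q z))) \<partial>count_space UNIV)"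
    unfolding nn_integral_measure_pmf
    by (intro nn_integral_cong) (simp add: ennreal_mult'[symmetric])
  finally show ?thesis .
qed

lemma two_ln2_minus_JSD:
  "2 * ennreal (ln 2 - JSD P Q) = (\<integral>\<^sup>+z. entropy2 (pmf P z) (pmf Q z) \<partial>count_space UNIV)"
proof -
  define A where "A = ln 2 - KL_pmf P (mix_pmf P Q)"
  define B where "B = ln 2 - KL_pmf Q (mix_pmf P Q)"
  have "0 \<le> A" "0 \<le> B"
    using KL_mix_pmf_le_ln2[of P Q] KL_mix_pmf_le_ln2[of Q P]
    by (simp_all add: A_def B_def mix_pmf_commute)
  have JSD_eq: "ln 2 - JSD P Q = (A + B) / 2"
    by (simp add: A_def B_def JSD_def field_simps)
  have double_half: "2 * ennreal (x / 2) = ennreal x" if "0 \<le> x" for x :: real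
    using that by (subst ennreal_numeral[symmetric], subst ennreal_mult[symmetric]) simp_all
  have "2 * ennreal (ln 2 - JSD P Q) = ennreal (A + B)"
    using JSD_eq double_half \<open>0 \<le> A\<close> \<open>0 \<le> B\<close> by (metis add_nonneg_nonneg)
  also have "\<dots> = ennreal A + ennreal B"
    using \<open>0 \<le> A\<close> \<open>0 \<le> B\<close> by simp
  also have "\<dots> = (\<integral>\<^sup>+z. ennreal (- (pmf P z * ln (pmf P z / (pmf P z + pmf Q z))))
                      + ennreal (- (pmf Q z * ln (pmf Q z / (pmf P z + pmf Q z)))) \<partial>count_space UNIV)"
    unfolding A_def B_def ennreal_ln2_minus_KL_mix_pmf
      ennreal_ln2_minus_KL_mix_pmf[of Q P, unfolded mix_pmf_commute[of Q P]]
    by (subst nn_integral_add[symmetric]) (simp_all add: add.commute ln_div_add_nonpos)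
  also have "\<dots> = (\<integral>\<^sup>+z. entropy2 (pmf P z) (pmf Q z) \<partial>count_space UNIV)"
  proof (intro nn_integral_cong)
    fix z
    have "pmf P z * ln (pmf P z / (pmf P z + pmf Q z)) \<le> 0"
      "pmf Q z * ln (pmf Q z / (pmf P z + pmf Q z)) \<le> 0"
      using ln_div_add_nonpos[of "pmf P z" "pmf Q z"] ln_div_add_nonpos[of "pmf Q z" "pmf P z"]
      by (simp_all add: mult_nonneg_nonpos add.commute)
    then show "ennreal (- (pmf P z * ln (pmf P z / (pmf P z + pmf Q z))))
        + ennreal (- (pmf Q z * ln (pmf Q z / (pmf P z + pmf Q z))))
        = ennreal (entropy2 (pmf P z) (pmf Q z))"
      by (simp add: entropy2_def ennreal_plus[symmetric] del: ennreal_plus)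
  qed
  finally show ?thesis .
qed

section \<open>Logistic risk of a pair of distributions\<close>

lemma nn_integral_logistic_pair_loss:
  fixes P Q :: "'a pmf"
  shows "(\<integral>\<^sup>+z. logistic_loss (g z) \<partial>P) + (\<integral>\<^sup>+z. logistic_loss (- g z) \<partial>Q)
     = (\<integral>\<^sup>+z. pmf P z * logistic_loss (g z) + pmf Q z * logistic_loss (- g z) \<partial>count_space UNIV)"
  unfolding nn_integral_measure_pmf
  by (subst nn_integral_add[symmetric])
     (simp_all add: logistic_loss_nonneg ennreal_mult'[symmetric] ennreal_plus[symmetric] del: ennreal_plus)

lemma nn_integral_eq_iff_AE_eq:
  fixes f g :: "'a \<Rightarrow> real"
  assumes "f \<in> borel_measurable M" "g \<in> borel_measurable M"
    and "\<And>z. 0 \<le> g z" "\<And>z. g z \<le> f z" and "(\<integral>\<^sup>+z. g z \<partial>M) \<noteq> \<infinity>"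
  shows "(\<integral>\<^sup>+z. f z \<partial>M) = (\<integral>\<^sup>+z. g z \<partial>M) \<longleftrightarrow> (AE z in M. f z = g z)"
proof -
  have "(\<integral>\<^sup>+z. f z \<partial>M) = (\<integral>\<^sup>+z. ennreal (f z - g z) + ennreal (g z) \<partial>M)"
    using assms(3,4) by (intro nn_integral_cong) (simp add: ennreal_plus[symmetric] del: ennreal_plus)
  also have "\<dots> = (\<integral>\<^sup>+z. f z - g z \<partial>M) + (\<integral>\<^sup>+z. g z \<partial>M)"
    using assms(1,2) by (intro nn_integral_add) auto
  finally have "(\<integral>\<^sup>+z. f z \<partial>M) = (\<integral>\<^sup>+z. g z \<partial>M) \<longleftrightarrow> (\<integral>\<^sup>+z. f z - g z \<partial>M) = 0"
    using assms(5) by simp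
  also have "\<dots> \<longleftrightarrow> (AE z in M. f z = g z)"
    using assms(1-4) by (subst nn_integral_0_iff_AE) (auto simp: ennreal_eq_0_iff intro: antisym)
  finally show ?thesis .
qed

theorem JSD_le_logistic_risk:
  fixes P Q :: "'a pmf"
  shows "2 * ennreal (ln 2 - JSD P Q) \<le> (\<integral>\<^sup>+z. logistic_loss (g z) \<partial>P) + (\<integral>\<^sup>+z. logistic_loss (- g z) \<partial>Q)"
  unfolding two_ln2_minus_JSD nn_integral_logistic_pair_loss
  by (intro nn_integral_mono ennreal_leI entropy2_le_logistic_pair_loss) simp_all

theorem logistic_risk_eq_JSD_iff:
  fixes P Q :: "'a pmf"
  assumes "set_pmf P = set_pmf Q"
  shows "(\<integral>\<^sup>+z. logistic_loss (g z) \<partial>P) + (\<integral>\<^sup>+z. logistic_loss (- g z) \<partial>Q) = 2 * ennreal (ln 2 - JSD P Q)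
     \<longleftrightarrow> (\<forall>z \<in> set_pmf P. g z = ln (pmf P z / pmf Q z))"
proof -
  have "(\<integral>\<^sup>+z. entropy2 (pmf P z) (pmf Q z) \<partial>count_space UNIV) \<noteq> \<infinity>"
    unfolding two_ln2_minus_JSD[symmetric] by (simp add: ennreal_mult_eq_top_iff)
  then have "(\<integral>\<^sup>+z. logistic_loss (g z) \<partial>P) + (\<integral>\<^sup>+z. logistic_loss (- g z) \<partial>Q) = 2 * ennreal (ln 2 - JSD P Q)
      \<longleftrightarrow> (\<forall>z. pmf P z * logistic_loss (g z) + pmf Q z * logistic_loss (- g z) = entropy2 (pmf P z) (pmf Q z))"
    unfolding two_ln2_minus_JSD nn_integral_logistic_pair_loss
    by (subst nn_integral_eq_iff_AE_eq)
       (simp_all add: AE_count_space entropy2_nonneg entropy2_le_logistic_pair_loss)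
  also have "\<dots> \<longleftrightarrow> (\<forall>z \<in> set_pmf P. g z = ln (pmf P z / pmf Q z))"
  proof -
    have "pmf P z * logistic_loss (g z) + pmf Q z * logistic_loss (- g z) = entropy2 (pmf P z) (pmf Q z)
        \<longleftrightarrow> (z \<in> set_pmf P \<longrightarrow> g z = ln (pmf P z / pmf Q z))" for z
    proof (cases "z \<in> set_pmf P")
      case True
      then have "0 < pmf P z" "0 < pmf Q z"
        using assms by (simp_all add: pmf_positive)
      then show ?thesis
        using True by (simp add: logistic_pair_loss_eq_entropy2_iff)
    next
      case False
      then have "pmf P z = 0" "pmf Q z = 0"
        using assms by (metis set_pmf_iff)+
      then show ?thesis
        using False by (simp add: entropy2_def)
    qed
    then show ?thesis
      by blast
  qed
  finally show ?thesis .
qed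

section \<open>The pair distributions p_plus and p_minus\<close>

lemma pmf_bind_pmf_eq_single:
  assumes "\<And>u. u \<noteq> v \<Longrightarrow> pmf (N u) z = 0"
  shows "pmf (bind_pmf M N) z = pmf M v * pmf (N v) z"
proof -
  have "pmf (bind_pmf M N) z = (\<integral>u. pmf (N v) z * indicator {v} u \<partial>M)"
    unfolding pmf_bind using assms
    by (intro Bochner_Integration.integral_cong) (auto split: split_indicator)
  then show ?thesis
    by (simp add: measure_pmf_single)
qed

lemma pmf_p_plus: "pmf (p_plus q pd pt) (y, y', x) = pmf q x * pmf (pd x) y * pmf (pt x) y'"
proof -
  have pmf_inner: "pmf (map_pmf (\<lambda>y'. (u, y', x)) (pt x)) (y, y', x) = (if u = y then pmf (pt x) y' else 0)" for u
  proof (cases "u = y")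
    case True
    have "inj (\<lambda>y'. (u, y', x))"
      by (simp add: inj_def)
    then show ?thesis
      using True pmf_map_inj'[of "\<lambda>y'. (u, y', x)" "pt x" y'] by simp
  qed (auto simp: pmf_eq_0_set_pmf)
  have "pmf (bind_pmf (pd u) (\<lambda>y. map_pmf (\<lambda>y'. (y, y', u)) (pt u))) (y, y', x) = 0" if "u \<noteq> x" for u
    using that by (auto simp: pmf_eq_0_set_pmf)
  then show ?thesis
    unfolding p_plus_def
    by (simp add: pmf_bind_pmf_eq_single[of x] pmf_bind_pmf_eq_single[of y] pmf_inner)
qed

lemma p_minus_eq_p_plus: "p_minus q pd pt = p_plus q pt pd"
  by (simp add: p_minus_def p_plus_def)

lemma p_minus_eq_map_swap: "p_minus q pd pt = map_pmf (\<lambda>(y, y', x). (y', y, x)) (p_plus q pd pt)"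
proof -
  have "map_pmf (\<lambda>(y, y', x). (y', y, x)) (p_plus q pd pt)
      = bind_pmf q (\<lambda>x. bind_pmf (pd x) (\<lambda>y. map_pmf (\<lambda>y'. (y', y, x)) (pt x)))"
    by (simp add: p_plus_def map_bind_pmf pmf.map_comp o_def)
  also have "\<dots> = p_minus q pd pt"
    unfolding p_minus_def map_pmf_def by (rule bind_pmf_cong[OF refl]) (rule bind_commute_pmf)
  finally show ?thesis ..
qed

lemma spin_loss_eq_nn_integral_p_plus:
  "spin_loss q pd pt f = (\<integral>\<^sup>+(y, y', x). logistic_loss (f x y - f x y') \<partial>p_plus q pd pt)"
  by (simp add: spin_loss_def p_plus_def)

lemma spin_loss_eq_nn_integral_p_minus:
  "spin_loss q pd pt f = (\<integral>\<^sup>+(y, y', x). logistic_loss (f x y' - f x y) \<partial>p_minus q pd pt)"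
  by (simp add: spin_loss_eq_nn_integral_p_plus p_minus_eq_map_swap case_prod_beta)

lemma set_pmf_p_plus:
  assumes "\<And>x y. 0 < pmf (pd x) y" "\<And>x y. 0 < pmf (pt x) y"
  shows "set_pmf (p_plus q pd pt) = {(y, y', x). x \<in> set_pmf q}"
proof -
  have "pmf (pd x) y \<noteq> 0" "pmf (pt x) y \<noteq> 0" for x y
    using assms[of x y] by simp_all
  then show ?thesis
    by (auto simp: set_pmf_iff pmf_p_plus)
qed

lemma ln_pmf_p_plus_div_p_minus:
  assumes "\<And>x y. 0 < pmf (pd x) y" "\<And>x y. 0 < pmf (pt x) y" and "x \<in> set_pmf q"
  shows "ln (pmf (p_plus q pd pt) (y, y', x) / pmf (p_minus q pd pt) (y, y', x))
       = ln (pmf (pd x) y / pmf (pt x) y) - ln (pmf (pd x) y' / pmf (pt x) y')"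
proof -
  define A where "A = pmf (pd x) y / pmf (pt x) y"
  define B where "B = pmf (pd x) y' / pmf (pt x) y'"
  have "0 < pmf q x"
    using assms(3) by (rule pmf_positive)
  then have "pmf (p_plus q pd pt) (y, y', x) / pmf (p_minus q pd pt) (y, y', x) = A / B"
    using assms(1,2)[of x] by (simp add: A_def B_def p_minus_eq_p_plus pmf_p_plus field_simps)
  moreover have "A \<noteq> 0" "B \<noteq> 0"
    using assms(1,2)[of x y] assms(1,2)[of x y'] by (simp_all add: A_def B_def)
  ultimately show ?thesis
    by (simp add: ln_div flip: A_def B_def)
qed

lemma ex_shift_iff_diffs_eq:
  fixes f r :: "'x \<Rightarrow> 'y \<Rightarrow> real"
  shows "(\<exists>Z. \<forall>x \<in> A. \<forall>y. f x y = Z x + r x y) \<longleftrightarrow> (\<forall>x \<in> A. \<forall>y y'. f x y - f x y' = r x y - r x y')"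
proof
  assume diffs: "\<forall>x \<in> A. \<forall>y y'. f x y - f x y' = r x y - r x y'"
  show "\<exists>Z. \<forall>x \<in> A. \<forall>y. f x y = Z x + r x y"
  proof (intro exI ballI allI)
    fix x y
    assume "x \<in> A"
    with diffs have "f x y - f x undefined = r x y - r x undefined"
      by blast
    then show "f x y = (f x undefined - r x undefined) + r x y"
      by simp
  qed
qed auto

theorem lemmaC2:
  fixes q :: "'x pmf" and pd pt :: "'x \<Rightarrow> 'y pmf"
  assumes pd_pos: "\<And>x y. pmf (pd x) y > 0"
      and pt_pos: "\<And>x y. pmf (pt x) y > 0"
  shows "(\<forall>f. spin_loss q pd pt f \<ge> ennreal (ln 2 - JSD (p_plus q pd pt) (p_minus q pd pt)))
       \<and> (\<forall>f. spin_loss q pd pt f = ennreal (ln 2 - JSD (p_plus q pd pt) (p_minus q pd pt))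
               \<longleftrightarrow> (\<exists>Z. \<forall>x \<in> set_pmf q. \<forall>y. f x y = Z x + ln (pmf (pd x) y / pmf (pt x) y)))"
proof (intro conjI allI)
  let ?P = "p_plus q pd pt" and ?Q = "p_minus q pd pt"
  fix f :: "'x \<Rightarrow> 'y \<Rightarrow> real"
  define g where "g = (\<lambda>(y, y', x). f x y - f x y')"
  have risk: "(\<integral>\<^sup>+z. logistic_loss (g z) \<partial>?P) + (\<integral>\<^sup>+z. logistic_loss (- g z) \<partial>?Q) = 2 * spin_loss q pd pt f"
    using spin_loss_eq_nn_integral_p_plus[of q pd pt f] spin_loss_eq_nn_integral_p_minus[of q pd pt f]
    by (simp add: g_def mult_2 case_prod_beta)
  have supp: "set_pmf ?P = set_pmf ?Q"
    unfolding p_minus_eq_p_plus using assms by (simp add: set_pmf_p_plus)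
  show "ennreal (ln 2 - JSD ?P ?Q) \<le> spin_loss q pd pt f"
    using JSD_le_logistic_risk[of ?P ?Q g] by (simp add: risk ennreal_mult_le_mult_iff)
  have "spin_loss q pd pt f = ennreal (ln 2 - JSD ?P ?Q)
      \<longleftrightarrow> 2 * spin_loss q pd pt f = 2 * ennreal (ln 2 - JSD ?P ?Q)"
    by (simp add: ennreal_mult_cancel_left)
  also have "\<dots> \<longleftrightarrow> (\<forall>z \<in> set_pmf ?P. g z = ln (pmf ?P z / pmf ?Q z))"
    unfolding risk[symmetric] by (rule logistic_risk_eq_JSD_iff[OF supp])
  also have "\<dots> \<longleftrightarrow> (\<forall>x \<in> set_pmf q. \<forall>y y'.
      f x y - f x y' = ln (pmf (pd x) y / pmf (pt x) y) - ln (pmf (pd x) y' / pmf (pt x) y'))"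
    using assms by (auto simp: set_pmf_p_plus g_def ln_pmf_p_plus_div_p_minus)
  also have "\<dots> \<longleftrightarrow> (\<exists>Z. \<forall>x \<in> set_pmf q. \<forall>y. f x y = Z x + ln (pmf (pd x) y / pmf (pt x) y))"
    by (rule ex_shift_iff_diffs_eq[symmetric])
  finally show "spin_loss q pd pt f = ennreal (ln 2 - JSD ?P ?Q)
      \<longleftrightarrow> (\<exists>Z. \<forall>x \<in> set_pmf q. \<forall>y. f x y = Z x + ln (pmf (pd x) y / pmf (pt x) y))" .
qed

end
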